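(* Fix an sBS $k$, a time slot $t$, and $\epsilon>0$. Let $\hat{\mathbf P}_k^{(t)}$ be an estimate of $\mathbf P_k$ obtained either by the point estimator or by the Bayesian estimator, and let $(\mathbf u_t,\mathbf v_t)\in\arg\max_{(\mathbf u,\mathbf v)\in\mathcal C_{c,r}}\mathbf u^T\hat{\mathbf P}_k^{(t)}\mathbf v$. Let $\widehat{\Delta P}^{(t)}:=\mathbf P_k-\hat{\mathbf P}_k^{(t)}$ and let $\mathcal N_\epsilon$ be an $\epsilon$-cover of $\mathcal C_{c,r}$. Then $$\Pr\Big\{\sup_{(\mathbf u,\mathbf v)\in\mathcal C_{c,r}}\mathbf u^T\mathbf P_k\mathbf v-\mathbf u_t^T\mathbf P_k\mathbf v_t\ge\epsilon\Big\}\le|\mathcal N_\epsilon|\,\Pr\Big\{\|\widehat{\Delta P}^{(t)}\|_F\ge\frac{\epsilon}{4\kappa rc}\Big\}.$$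
   Context: Setting: a catalog of $F$ files $\{1,\dots,F\}$; time is slotted; in every slot each of $N$ users of a small base station (sBS) requests a file. For sBS $k$, the probability transition matrix (PTM) $\mathbf P_k\in[0,1]^{F\times F}$ has entries $(\mathbf P_k)_{ij}=p_{ij,k}$, the probability that a user at sBS $k$ requests file $i$ given that file $j$ is recommended; $\mathbf P_k$ does not change over time. For a cache size $c>0$ and a recommendation budget $r>0$, the strategy set is $\mathcal C_{c,r}=\{(\mathbf u,\mathbf v)\in[0,1]^F\times[0,1]^F:\mathbf u^T\mathbf 1\le c,\ \mathbf v^T\mathbf 1\le r\}$, where $u_i$ (resp. $v_j$) is the probability of caching file $i$ (resp. recommending file $j$); the average cache hit of $(\mathbf u,\mathbf v)$ at sBS $k$ is $\mathbf u^T\mathbf P_k\mathbf v$. $d_{ik}^{(s)}$ is the number of requests for file $i$ at sBS $k$ in slot $s$, and $v_{jk}^{s}\in\{0,1\}$ indicates whether file $j$ was recommended at sBS $k$ in slot $s$. Point estimator: $\hat p_{ij,k}^{(t)}=\frac{\sum_{s=0}^{t-1}d_{ik}^{(s)}v_{jk}^{s-1}}{N\sum_{s=0}^{t-1}v_{jk}^{s-1}}$. Bayesian estimator: for each $j$ independently, the column $(\hat p^{(t)}_{1j,k},\dots,\hat p^{(t)}_{Fj,k})$ is drawn from the Dirichlet distribution $\mathrm{Dir}(\alpha^{(t)}_{1jk},\dots,\alpha^{(t)}_{Fjk})$ with $\alpha^{(t)}_{ijk}=\sum_{q=1}^{t-1}d_{ik}^{(q)}v_{jk}^{q-1}$. An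 $\epsilon$-cover of $\mathcal C_{c,r}$ is a finite set $\mathcal N_\epsilon$ of pairs $(\mathbf x,\mathbf y)$ such that for every $(\mathbf u,\mathbf v)\in\mathcal C_{c,r}$ some $(\mathbf x,\mathbf y)\in\mathcal N_\epsilon$ satisfies $\|\mathbf u-\mathbf x\|_2\le\epsilon/8$ and $\|\mathbf v-\mathbf y\|_2\le\epsilon/8$; $|\mathcal N_\epsilon|$ is its cardinality. $\kappa>0$ is a fixed constant such that $|\mathbf x^T A\mathbf y|\le\kappa\|\mathbf x\|_1\|\mathbf y\|_1\|A\|_F$ for all vectors $\mathbf x,\mathbf y$ and matrices $A$. *)

theory Defs
  imports "HOL-Probability.Probability"
begin

text \<open>Files are indexed by a finite type 'f (so F = CARD('f)).
  Vectors are real^'f, matrices real^'f^'f with (A $ i $ j) the (i,j) entry.\<close>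

definition l1norm :: "real^'f \<Rightarrow> real" where
  "l1norm x = (\<Sum>i\<in>UNIV. \<bar>x $ i\<bar>)"

definition frob_norm :: "real^'f^'f \<Rightarrow> real" where
  "frob_norm A = sqrt (\<Sum>i\<in>UNIV. \<Sum>j\<in>UNIV. (A $ i $ j)^2)"

definition cache_hit :: "real^'f \<Rightarrow> real^'f^'f \<Rightarrow> real^'f \<Rightarrow> real" where
  "cache_hit u P v = u \<bullet> (P *v v)"

definition strat_set :: "real \<Rightarrow> real \<Rightarrow> ((real^'f) \<times> (real^'f)) set" where
  "strat_set c r = {(u, v). (\<forall>i. 0 \<le> u $ i \<and> u $ i \<le> 1) \<and> (\<forall>j. 0 \<le> v $ j \<and> v $ j \<le> 1)
                      \<and> (\<Sum>i\<in>UNIV. u $ i) \<le> c \<and> (\<Sum>j\<in>UNIV. v $ j) \<le> r}"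

definition is_eps_cover :: "real \<Rightarrow> real \<Rightarrow> real \<Rightarrow> ((real^'f) \<times> (real^'f)) set \<Rightarrow> bool" where
  "is_eps_cover eps c r N \<longleftrightarrow> finite N \<and>
     (\<forall>(u, v)\<in>strat_set c r. \<exists>(x, y)\<in>N. norm (u - x) \<le> eps / 8 \<and> norm (v - y) \<le> eps / 8)"

end

theory Submission
  imports Defs
begin

text \<open>If the maximiser of the estimated hit rate is used, its true hit rate falls short of the
  optimum by at most twice the uniform estimation error on the strategy set, and by the
  \<open>\<kappa>\<close>-inequality that error is at most \<open>\<kappa> c r \<parallel>P - P\<^sub>t\<parallel>\<^sub>F\<close>. Hence regret \<open>\<ge> \<epsilon>\<close> forces
  \<open>\<parallel>P - P\<^sub>t\<parallel>\<^sub>F \<ge> \<epsilon> / (4\<kappa>rc)\<close> pointwise, and the cover only contributes the factor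
  \<open>|N\<^sub>\<epsilon>| \<ge> 1\<close>. The entry bounds \<open>0 \<le> P \<le> 1\<close> are not needed.\<close>

lemma frob_norm_eq_norm: "frob_norm (A :: real^'f^'f) = norm A"
  unfolding frob_norm_def norm_vec_def L2_set_def
  by (simp add: real_sqrt_pow2 sum_nonneg)

lemma l1norm_nonneg: "0 \<le> l1norm x"
  unfolding l1norm_def by (simp add: sum_nonneg)

lemma strat_set_l1norm_le:
  assumes "(u, v) \<in> strat_set c r"
  shows "l1norm u \<le> c" and "l1norm v \<le> r"
  using assms unfolding strat_set_def l1norm_def by auto

lemma zero_in_strat_set: "0 \<le> c \<Longrightarrow> 0 \<le> r \<Longrightarrow> (0, 0) \<in> strat_set c r"
  unfolding strat_set_def by auto

lemma eps_cover_card_ge_1: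
  assumes "is_eps_cover eps c r N" "0 \<le> c" "0 \<le> r"
  shows "1 \<le> card N"
proof -
  have "finite N" "N \<noteq> {}"
    using assms zero_in_strat_set[of c r] unfolding is_eps_cover_def by auto
  then show ?thesis
    by (simp add: Suc_le_eq card_gt_0_iff)
qed

lemma cache_hit_diff: "cache_hit u P v - cache_hit u Q v = u \<bullet> ((P - Q) *v v)"
  unfolding cache_hit_def by (simp add: matrix_vector_mult_diff_rdistrib inner_diff_right)

lemma cache_hit_perturbation_le:
  fixes u v :: "real^'f"
  assumes kappa: "\<forall>(x::real^'f) (y::real^'f) (A::real^'f^'f).
                    \<bar>x \<bullet> (A *v y)\<bar> \<le> \<kappa> * l1norm x * l1norm y * frob_norm A"
    and "0 \<le> \<kappa>" and uv: "(u, v) \<in> strat_set c r"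
  shows "\<bar>cache_hit u P v - cache_hit u Q v\<bar> \<le> \<kappa> * c * r * frob_norm (P - Q)"
proof -
  have "\<kappa> * l1norm u * l1norm v * frob_norm (P - Q) \<le> \<kappa> * c * r * frob_norm (P - Q)"
    using strat_set_l1norm_le[OF uv] \<open>0 \<le> \<kappa>\<close> l1norm_nonneg[of u] l1norm_nonneg[of v]
    by (intro mult_right_mono mult_mono mult_left_mono) (auto simp: frob_norm_eq_norm)
  moreover have "\<bar>u \<bullet> ((P - Q) *v v)\<bar> \<le> \<kappa> * l1norm u * l1norm v * frob_norm (P - Q)"
    using kappa by blast
  ultimately show ?thesis
    by (simp add: cache_hit_diff)
qed

lemma SUP_minus_argmax_le:
  fixes f g :: "'a \<Rightarrow> real"
  assumes "x\<^sub>0 \<in> S" and argmax: "\<forall>x\<in>S. g x \<le> g x\<^sub>0"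
    and close: "\<forall>x\<in>S. \<bar>f x - g x\<bar> \<le> \<delta>"
  shows "(SUP x\<in>S. f x) - f x\<^sub>0 \<le> 2 * \<delta>"
proof -
  have "f x \<le> f x\<^sub>0 + 2 * \<delta>" if "x \<in> S" for x
  proof -
    have "\<bar>f x - g x\<bar> \<le> \<delta>" "g x \<le> g x\<^sub>0" "\<bar>f x\<^sub>0 - g x\<^sub>0\<bar> \<le> \<delta>"
      using that argmax close \<open>x\<^sub>0 \<in> S\<close> by simp_all
    then show ?thesis by linarith
  qed
  then have "(SUP x\<in>S. f x) \<le> f x\<^sub>0 + 2 * \<delta>"
    using \<open>x\<^sub>0 \<in> S\<close> by (intro cSUP_least) auto
  then show ?thesis by simp
qed

lemma regret_le_estimation_error:
  fixes u\<^sub>0 v\<^sub>0 :: "real^'f"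
  assumes kappa: "\<forall>(x::real^'f) (y::real^'f) (A::real^'f^'f).
                    \<bar>x \<bullet> (A *v y)\<bar> \<le> \<kappa> * l1norm x * l1norm y * frob_norm A"
    and "0 \<le> \<kappa>" and "(u\<^sub>0, v\<^sub>0) \<in> strat_set c r"
    and argmax: "\<forall>(u, v)\<in>strat_set c r. cache_hit u Q v \<le> cache_hit u\<^sub>0 Q v\<^sub>0"
  shows "(SUP uv\<in>strat_set c r. cache_hit (fst uv) P (snd uv)) - cache_hit u\<^sub>0 P v\<^sub>0
           \<le> 2 * (\<kappa> * c * r * frob_norm (P - Q))"
proof -
  have "\<forall>uv\<in>strat_set c r. cache_hit (fst uv) Q (snd uv) \<le> cache_hit u\<^sub>0 Q v\<^sub>0"
    using argmax by auto
  moreover have "\<forall>uv\<in>strat_set c r. \<bar>cache_hit (fst uv) P (snd uv) - cache_hit (fst uv) Q (snd uv)\<bar>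
                   \<le> \<kappa> * c * r * frob_norm (P - Q)"
    using cache_hit_perturbation_le[OF kappa \<open>0 \<le> \<kappa>\<close>] by fastforce
  ultimately show ?thesis
    using SUP_minus_argmax_le[where f = "\<lambda>uv. cache_hit (fst uv) P (snd uv)"
        and g = "\<lambda>uv. cache_hit (fst uv) Q (snd uv)" and x\<^sub>0 = "(u\<^sub>0, v\<^sub>0)"] \<open>(u\<^sub>0, v\<^sub>0) \<in> strat_set c r\<close>
    by simp
qed

theorem theorem1:
  fixes M :: "'w measure"
    and P :: "real^'f^'f"
    and Phat :: "'w \<Rightarrow> real^'f^'f"
    and ut vt :: "'w \<Rightarrow> real^'f"
    and c r eps \<kappa> :: real
    and N :: "((real^'f) \<times> (real^'f)) set"
  assumes "prob_space M"
    and "Phat \<in> borel_measurable M"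
    and "\<forall>i j. 0 \<le> P $ i $ j \<and> P $ i $ j \<le> 1"
    and "c > 0" and "r > 0" and "eps > 0" and "\<kappa> > 0"
    and kappa: "\<forall>(x::real^'f) (y::real^'f) (A::real^'f^'f).
                  \<bar>x \<bullet> (A *v y)\<bar> \<le> \<kappa> * l1norm x * l1norm y * frob_norm A"
    and argmax: "\<forall>\<omega>\<in>space M. (ut \<omega>, vt \<omega>) \<in> strat_set c r \<and>
                  (\<forall>(u, v)\<in>strat_set c r. cache_hit u (Phat \<omega>) v \<le> cache_hit (ut \<omega>) (Phat \<omega>) (vt \<omega>))"
    and "is_eps_cover eps c r N"
  shows "measure M {\<omega>\<in>space M.
            (SUP uv\<in>strat_set c r. cache_hit (fst uv) P (snd uv)) - cache_hit (ut \<omega>) P (vt \<omega>) \<ge> eps}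
         \<le> real (card N) * measure M {\<omega>\<in>space M. frob_norm (P - Phat \<omega>) \<ge> eps / (4 * \<kappa> * r * c)}"
    (is "measure M ?regret \<le> _ * measure M ?error")
proof -
  interpret prob_space M by fact
  have regret_le: "(SUP uv\<in>strat_set c r. cache_hit (fst uv) P (snd uv)) - cache_hit (ut \<omega>) P (vt \<omega>)
                     \<le> 2 * (\<kappa> * c * r * frob_norm (P - Phat \<omega>))" if "\<omega> \<in> space M" for \<omega>
    using bspec[OF argmax that] \<open>\<kappa> > 0\<close> by (intro regret_le_estimation_error[OF kappa]) auto
  have "?regret \<subseteq> ?error"
  proof
    fix \<omega> assume \<omega>: "\<omega> \<in> ?regret"
    then have "eps / 2 \<le> \<kappa> * c * r * frob_norm (P - Phat \<omega>)"
      using regret_le[of \<omega>] by auto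
    with \<omega> show "\<omega> \<in> ?error"
      using \<open>c > 0\<close> \<open>r > 0\<close> \<open>\<kappa> > 0\<close> \<open>eps > 0\<close> by (auto simp: field_simps)
  qed
  moreover have "?error \<in> sets M"
    using \<open>Phat \<in> borel_measurable M\<close> unfolding frob_norm_eq_norm by measurable
  ultimately have "measure M ?regret \<le> measure M ?error"
    by (cases "?regret \<in> sets M") (auto intro: finite_measure_mono simp: measure_notin_sets)
  also have "\<dots> \<le> real (card N) * measure M ?error"
    using eps_cover_card_ge_1[OF \<open>is_eps_cover eps c r N\<close>] \<open>c > 0\<close> \<open>r > 0\<close>
      mult_right_mono[of 1 "real (card N)" "measure M ?error"]
    by simp
  finally show ?thesis .
qed

end
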